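(* Let $(T,\eta,(-)^\#,\sqsubseteq,\Uparrow)$ be a while-monad on $\mathbf{Set}$, $(\Omega,\le)$ a complete lattice and $o:T\Omega\to\Omega$ a meet-preserving Eilenberg–Moore $T$-algebra with $o(\bigsqcup_i c_i)=\bigwedge_i o(c_i)$ for every $\omega$-chain $(c_i)$ in $(T\Omega,\sqsubseteq_\Omega)$ and $o(\Uparrow_\Omega)=\top$. Let $(A,\le_A)$ be a complete lattice (with binary meets $\wedge_A$, joins $\vee_A$) and $\alpha:\mathcal P_\Omega(\mathbb M)\to A$, $\gamma:A\to\mathcal P_\Omega(\mathbb M)$ a Galois connection $\alpha\dashv\gamma$. Define $\llbracket-\rrbracket^\sharp$ on while programs by induction: $\llbracket\mathtt{skip}\rrbracket^\sharp=\mathrm{id}_A$, $\llbracket P;P'\rrbracket^\sharp=\llbracket P'\rrbracket^\sharp\circ\llbracket P\rrbracket^\sharp$, $\llbracket x:=e\rrbracket^\sharp=\alpha\circ sp^o(\llbracket x:=e\rrbracket)\circ\gamma$, $\llbracket\mathtt{if}\ b\ \{P_1\}\ \mathtt{else}\ \{P_2\}\rrbracket^\sharp=\lambda\phi.\ \llbracket P_1\rrbracket^\sharp(\phi\wedge_A\alpha(\mathrm{grd}_b^{\mathrm{tt}}))\vee_A\llbracket P_2\rrbracket^\sharp(\phi\wedge_A\alpha(\mathrm{grd}_b^{\mathrm{ff}}))$, and $\llbracket\mathtt{while}\ b\ \{P\}\rrbracket^\sharp=\mu\Theta$, the least fixpoint in the complete lattice of monotone maps $A\to A$ (pointwise order)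 of $\Theta(f)=\lambda\phi.\ f(\llbracket P\rrbracket^\sharp(\phi\wedge_A\alpha(\mathrm{grd}_b^{\mathrm{tt}})))\vee_A(\phi\wedge_A\alpha(\mathrm{grd}_b^{\mathrm{ff}}))$. Then $\llbracket-\rrbracket^\sharp$ is a functor $L_w\to\mathbf{Pos}$ (sending the unique object to $A$), and for every program $P$, $\alpha\circ\llbracket P\rrbracket^c\circ\gamma\le\llbracket P\rrbracket^\sharp$ pointwise.
   Context: Fix a set of values $\mathbb V$, a finite set of variables $X$, and memories $\mathbb M=\mathbb V^X$. Programs: $P::=\mathtt{skip}\mid P;P\mid x:=e\mid \mathtt{if}\ b\ \{P\}\ \mathtt{else}\ \{P\}\mid \mathtt{while}\ b\ \{P\}$; $L_w$ is the one-object category whose morphisms are programs, with composition given by sequencing $;$ (taken associative) and identity $\mathtt{skip}$ (with $\mathtt{skip};P=P;\mathtt{skip}=P$). Each condition $b$ has a given interpretation $\llbracket b\rrbracket:\mathbb M\to\{\mathrm{ff},\mathrm{tt}\}$. A while-monad on $\mathbf{Set}$ is a monad $(T,\eta,(-)^\#)$ on $\mathbf{Set}$ together with an $\omega$-cpo structure $(\sqsubseteq_X,\Uparrow_X)$ (least element $\Uparrow_X$, sups $\bigsqcup$ of $\omega$-chains) on each $TX$, such that, with $\sqsubseteq_{X,Y}$ the pointwise order on Kleisli maps $\mathbf{Set}_T(X,Y)=\mathbf{Set}(X,TY)$ and $\Uparrow_{X,Y}=\lambda x.\Uparrow_Y$: Kleisli composition $g\bullet f=g^\#\circ f$ is monotone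 and $\omega$-continuous in each argument, and $f\bullet\Uparrow_{X,Y}=\Uparrow_{X,Z}$. Monadic semantics: each assignment has a given $\llbracket x:=e\rrbracket\in\mathbf{Set}_T(\mathbb M,\mathbb M)$, and $\llbracket\mathtt{skip}\rrbracket_T=\eta_{\mathbb M}$, $\llbracket P;P'\rrbracket_T=\llbracket P'\rrbracket_T\bullet\llbracket P\rrbracket_T$, $\llbracket x:=e\rrbracket_T=\llbracket x:=e\rrbracket$, $\llbracket\mathtt{if}\ b\ \{P_1\}\ \mathtt{else}\ \{P_2\}\rrbracket_T=\lambda\rho.$ if $\llbracket b\rrbracket\rho=\mathrm{tt}$ then $\llbracket P_1\rrbracket_T(\rho)$ else $\llbracket P_2\rrbracket_T(\rho)$, $\llbracket\mathtt{while}\ b\ \{P\}\rrbracket_T=\mu\Phi$ (least fixpoint w.r.t. $\sqsubseteq_{\mathbb M,\mathbb M}$) with $\Phi(f)=\lambda\rho.$ if $\llbracket b\rrbracket\rho=\mathrm{tt}$ then $(f\bullet\llbracket P\rrbracket_T)(\rho)$ else $\eta_{\mathbb M}(\rho)$. $\mathcal P_\Omega(Y)=(\mathbf{Set}(Y,\Omega),\le_Y)$ with pointwise order. An Eilenberg–Moore algebra $o$ is meet-preserving if each $\phi\mapsto o\circ T\phi:\mathcal P_\Omega(Y)\to\mathcal P_\Omega(TY)$ preserves arbitrary meets. For $f\in\mathbf{Set}_T(Y,Z)$, $wp^o(f)(\phi)=o\circ T\phi\circ f$ and $sp^o(f)$ is the left adjoint of $wp^o(f)$. The collecting semantics is $\llbracket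 P\rrbracket^c=sp^o(\llbracket P\rrbracket_T):\mathcal P_\Omega(\mathbb M)\to\mathcal P_\Omega(\mathbb M)$. $\mathrm{grd}_b^v\in\mathcal P_\Omega(\mathbb M)$: $\mathrm{grd}_b^v(\rho)=\top$ if $\llbracket b\rrbracket\rho=v$, else $\bot$. A Galois connection $\alpha\dashv\gamma$ means $\alpha(\phi)\le_A a\iff\phi\le\gamma(a)$. *)

theory Defs
  imports Main
begin

datatype ('x, 'e, 'b) prog =
    Skip
  | Seq "('x, 'e, 'b) prog" "('x, 'e, 'b) prog"
  | Assign 'x 'e
  | If 'b "('x, 'e, 'b) prog" "('x, 'e, 'b) prog"
  | While 'b "('x, 'e, 'b) prog"

text \<open>Morphisms of L_w: programs modulo associativity of sequencing and the
  unit laws of skip (congruence closure).\<close>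
inductive prog_eq :: "('x, 'e, 'b) prog \<Rightarrow> ('x, 'e, 'b) prog \<Rightarrow> bool" where
  pe_refl: "prog_eq P P"
| pe_sym: "prog_eq P Q \<Longrightarrow> prog_eq Q P"
| pe_trans: "prog_eq P Q \<Longrightarrow> prog_eq Q R \<Longrightarrow> prog_eq P R"
| pe_assoc: "prog_eq (Seq (Seq P Q) R) (Seq P (Seq Q R))"
| pe_skipL: "prog_eq (Seq Skip P) P"
| pe_skipR: "prog_eq (Seq P Skip) P"
| pe_seq: "prog_eq P P' \<Longrightarrow> prog_eq Q Q' \<Longrightarrow> prog_eq (Seq P Q) (Seq P' Q')"
| pe_if: "prog_eq P P' \<Longrightarrow> prog_eq Q Q' \<Longrightarrow> prog_eq (If b P Q) (If b P' Q')"
| pe_while: "prog_eq P P' \<Longrightarrow> prog_eq (While b P) (While b P')"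

definition omega_chain :: "('t \<Rightarrow> 't \<Rightarrow> bool) \<Rightarrow> (nat \<Rightarrow> 't) \<Rightarrow> bool" where
  "omega_chain le c \<longleftrightarrow> (\<forall>i. le (c i) (c (Suc i)))"

definition is_lub :: "('t \<Rightarrow> 't \<Rightarrow> bool) \<Rightarrow> (nat \<Rightarrow> 't) \<Rightarrow> 't \<Rightarrow> bool" where
  "is_lub le c s \<longleftrightarrow> (\<forall>i. le (c i) s) \<and> (\<forall>u. (\<forall>i. le (c i) u) \<longrightarrow> le s u)"

definition omega_cpo :: "('t \<Rightarrow> 't \<Rightarrow> bool) \<Rightarrow> 't \<Rightarrow> bool" where
  "omega_cpo le bt \<longleftrightarrow>
     (\<forall>x. le x x) \<and> (\<forall>x y z. le x y \<longrightarrow> le y z \<longrightarrow> le x z) \<and>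
     (\<forall>x y. le x y \<longrightarrow> le y x \<longrightarrow> x = y) \<and> (\<forall>x. le bt x) \<and>
     (\<forall>c. omega_chain le c \<longrightarrow> (\<exists>s. is_lub le c s))"

definition fun_le :: "('t \<Rightarrow> 't \<Rightarrow> bool) \<Rightarrow> ('x \<Rightarrow> 't) \<Rightarrow> ('x \<Rightarrow> 't) \<Rightarrow> bool" where
  "fun_le le f g \<longleftrightarrow> (\<forall>x. le (f x) (g x))"

text \<open>Kleisli composition g \<bullet> f = g^# \<circ> f, the bind being the Kleisli extension.\<close>
definition kleisli :: "(('y \<Rightarrow> 'tz) \<Rightarrow> 'ty \<Rightarrow> 'tz) \<Rightarrow> ('y \<Rightarrow> 'tz) \<Rightarrow> ('x \<Rightarrow> 'ty) \<Rightarrow> 'x \<Rightarrow> 'tz" where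
  "kleisli ext g f = ext g \<circ> f"

section \<open>While-monads (restricted to the objects M and Omega)\<close>

definition unit_left :: "('y \<Rightarrow> 'ty) \<Rightarrow> (('y \<Rightarrow> 'tz) \<Rightarrow> 'ty \<Rightarrow> 'tz) \<Rightarrow> bool" where
  "unit_left eta ext \<longleftrightarrow> (\<forall>f y. ext f (eta y) = f y)"

definition unit_right :: "('y \<Rightarrow> 'ty) \<Rightarrow> (('y \<Rightarrow> 'ty) \<Rightarrow> 'ty \<Rightarrow> 'ty) \<Rightarrow> bool" where
  "unit_right eta ext \<longleftrightarrow> (\<forall>t. ext eta t = t)"

definition ext_assoc :: "(('y \<Rightarrow> 'tz) \<Rightarrow> 'ty \<Rightarrow> 'tz) \<Rightarrow> (('z \<Rightarrow> 'tw) \<Rightarrow> 'tz \<Rightarrow> 'tw)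
    \<Rightarrow> (('y \<Rightarrow> 'tw) \<Rightarrow> 'ty \<Rightarrow> 'tw) \<Rightarrow> bool" where
  "ext_assoc eYZ eZW eYW \<longleftrightarrow> (\<forall>g h t. eZW h (eYZ g t) = eYW (\<lambda>y. eZW h (g y)) t)"

text \<open>Conditions on Kleisli composition Set_T(X,Y) x Set_T(Y,Z) -> Set_T(X,Z),
  for a source object X given by the phantom type argument.\<close>
definition kleisli_conds :: "'x itself \<Rightarrow> ('ty \<Rightarrow> 'ty \<Rightarrow> bool) \<Rightarrow> 'ty \<Rightarrow>
    ('tz \<Rightarrow> 'tz \<Rightarrow> bool) \<Rightarrow> 'tz \<Rightarrow> (('y \<Rightarrow> 'tz) \<Rightarrow> 'ty \<Rightarrow> 'tz) \<Rightarrow> bool" where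
  "kleisli_conds _ leY botY leZ botZ ext \<longleftrightarrow>
     (\<forall>(f :: 'x \<Rightarrow> 'ty) f' g. fun_le leY f f' \<longrightarrow>
        fun_le leZ (kleisli ext g f) (kleisli ext g f')) \<and>
     (\<forall>(f :: 'x \<Rightarrow> 'ty) g g'. fun_le leZ g g' \<longrightarrow>
        fun_le leZ (kleisli ext g f) (kleisli ext g' f)) \<and>
     (\<forall>(fs :: nat \<Rightarrow> 'x \<Rightarrow> 'ty) F g. omega_chain (fun_le leY) fs \<longrightarrow> is_lub (fun_le leY) fs F \<longrightarrow>
        is_lub (fun_le leZ) (\<lambda>i. kleisli ext g (fs i)) (kleisli ext g F)) \<and>
     (\<forall>(f :: 'x \<Rightarrow> 'ty) gs G. omega_chain (fun_le leZ) gs \<longrightarrow> is_lub (fun_le leZ) gs G \<longrightarrow>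
        is_lub (fun_le leZ) (\<lambda>i. kleisli ext (gs i) f) (kleisli ext G f)) \<and>
     (\<forall>g. kleisli ext g (\<lambda>_ :: 'x. botY) = (\<lambda>_. botZ))"

text \<open>A while-monad, given on the objects 'm (memories) and 'o (Omega):
  units, Kleisli extensions between these objects, omega-cpo structures on T 'm and T 'o.\<close>
definition while_monad ::
  "('m \<Rightarrow> 'tm) \<Rightarrow> ('o \<Rightarrow> 'to) \<Rightarrow>
   (('m \<Rightarrow> 'tm) \<Rightarrow> 'tm \<Rightarrow> 'tm) \<Rightarrow> (('m \<Rightarrow> 'to) \<Rightarrow> 'tm \<Rightarrow> 'to) \<Rightarrow>
   (('o \<Rightarrow> 'tm) \<Rightarrow> 'to \<Rightarrow> 'tm) \<Rightarrow> (('o \<Rightarrow> 'to) \<Rightarrow> 'to \<Rightarrow> 'to) \<Rightarrow>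
   ('tm \<Rightarrow> 'tm \<Rightarrow> bool) \<Rightarrow> 'tm \<Rightarrow> ('to \<Rightarrow> 'to \<Rightarrow> bool) \<Rightarrow> 'to \<Rightarrow> bool" where
  "while_monad etaM etaO eMM eMO eOM eOO leM botM leO botO \<longleftrightarrow>
     unit_left etaM eMM \<and> unit_left etaM eMO \<and> unit_left etaO eOM \<and> unit_left etaO eOO \<and>
     unit_right etaM eMM \<and> unit_right etaO eOO \<and>
     ext_assoc eMM eMM eMM \<and> ext_assoc eMM eMO eMO \<and> ext_assoc eMO eOM eMM \<and> ext_assoc eMO eOO eMO \<and>
     ext_assoc eOM eMM eOM \<and> ext_assoc eOM eMO eOO \<and> ext_assoc eOO eOM eOM \<and> ext_assoc eOO eOO eOO \<and>
     omega_cpo leM botM \<and> omega_cpo leO botO \<and>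
     kleisli_conds TYPE('m) leM botM leM botM eMM \<and> kleisli_conds TYPE('m) leM botM leO botO eMO \<and>
     kleisli_conds TYPE('m) leO botO leM botM eOM \<and> kleisli_conds TYPE('m) leO botO leO botO eOO \<and>
     kleisli_conds TYPE('o) leM botM leM botM eMM \<and> kleisli_conds TYPE('o) leM botM leO botO eMO \<and>
     kleisli_conds TYPE('o) leO botO leM botM eOM \<and> kleisli_conds TYPE('o) leO botO leO botO eOO"

definition Tmap :: "(('y \<Rightarrow> 'tz) \<Rightarrow> 'ty \<Rightarrow> 'tz) \<Rightarrow> ('z \<Rightarrow> 'tz) \<Rightarrow> ('y \<Rightarrow> 'z) \<Rightarrow> 'ty \<Rightarrow> 'tz" where
  "Tmap ext eta phi = ext (eta \<circ> phi)"

text \<open>Eilenberg--Moore algebra law o \<circ> mu = o \<circ> T o, in Kleisli form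
  o \<circ> h^# = o \<circ> T(o \<circ> h), for h with source M and Omega.\<close>
definition em_algebra :: "('o \<Rightarrow> 'to) \<Rightarrow> (('m \<Rightarrow> 'to) \<Rightarrow> 'tm \<Rightarrow> 'to) \<Rightarrow>
    (('o \<Rightarrow> 'to) \<Rightarrow> 'to \<Rightarrow> 'to) \<Rightarrow> ('to \<Rightarrow> 'o) \<Rightarrow> bool" where
  "em_algebra etaO eMO eOO alg \<longleftrightarrow>
     (\<forall>w. alg (etaO w) = w) \<and>
     (\<forall>h t. alg (eMO h t) = alg (Tmap eMO etaO (alg \<circ> h) t)) \<and>
     (\<forall>h t. alg (eOO h t) = alg (Tmap eOO etaO (alg \<circ> h) t))"

definition meet_preserving :: "('o::complete_lattice \<Rightarrow> 'to) \<Rightarrow> (('m \<Rightarrow> 'to) \<Rightarrow> 'tm \<Rightarrow> 'to) \<Rightarrow>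
    (('o \<Rightarrow> 'to) \<Rightarrow> 'to \<Rightarrow> 'to) \<Rightarrow> ('to \<Rightarrow> 'o) \<Rightarrow> bool" where
  "meet_preserving etaO eMO eOO alg \<longleftrightarrow>
     (\<forall>S :: ('m \<Rightarrow> 'o) set. alg \<circ> Tmap eMO etaO (Inf S) = Inf ((\<lambda>phi. alg \<circ> Tmap eMO etaO phi) ` S)) \<and>
     (\<forall>S :: ('o \<Rightarrow> 'o) set. alg \<circ> Tmap eOO etaO (Inf S) = Inf ((\<lambda>phi. alg \<circ> Tmap eOO etaO phi) ` S))"

definition wp :: "('o \<Rightarrow> 'to) \<Rightarrow> (('m \<Rightarrow> 'to) \<Rightarrow> 'tm \<Rightarrow> 'to) \<Rightarrow> ('to \<Rightarrow> 'o) \<Rightarrow>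
    ('m \<Rightarrow> 'tm) \<Rightarrow> ('m \<Rightarrow> 'o) \<Rightarrow> 'm \<Rightarrow> 'o" where
  "wp etaO eMO alg f phi = alg \<circ> Tmap eMO etaO phi \<circ> f"

definition sp :: "('o::order \<Rightarrow> 'to) \<Rightarrow> (('m \<Rightarrow> 'to) \<Rightarrow> 'tm \<Rightarrow> 'to) \<Rightarrow> ('to \<Rightarrow> 'o) \<Rightarrow>
    ('m \<Rightarrow> 'tm) \<Rightarrow> ('m \<Rightarrow> 'o) \<Rightarrow> 'm \<Rightarrow> 'o" where
  "sp etaO eMO alg f = (THE g. \<forall>psi phi. g psi \<le> phi \<longleftrightarrow> psi \<le> wp etaO eMO alg f phi)"

definition least_fix :: "('t \<Rightarrow> 't \<Rightarrow> bool) \<Rightarrow> ('t \<Rightarrow> 't) \<Rightarrow> 't" where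
  "least_fix le F = (THE f. F f = f \<and> (\<forall>g. F g = g \<longrightarrow> le f g))"

primrec semT :: "('m \<Rightarrow> 'tm) \<Rightarrow> (('m \<Rightarrow> 'tm) \<Rightarrow> 'tm \<Rightarrow> 'tm) \<Rightarrow> ('tm \<Rightarrow> 'tm \<Rightarrow> bool) \<Rightarrow>
    ('x \<Rightarrow> 'e \<Rightarrow> 'm \<Rightarrow> 'tm) \<Rightarrow> ('b \<Rightarrow> 'm \<Rightarrow> bool) \<Rightarrow> ('x, 'e, 'b) prog \<Rightarrow> 'm \<Rightarrow> 'tm" where
  "semT etaM eMM leM asgn cond Skip = etaM"
| "semT etaM eMM leM asgn cond (Seq P Q) =
     kleisli eMM (semT etaM eMM leM asgn cond Q) (semT etaM eMM leM asgn cond P)"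
| "semT etaM eMM leM asgn cond (Assign x e) = asgn x e"
| "semT etaM eMM leM asgn cond (If b P Q) =
     (\<lambda>\<rho>. if cond b \<rho> then semT etaM eMM leM asgn cond P \<rho> else semT etaM eMM leM asgn cond Q \<rho>)"
| "semT etaM eMM leM asgn cond (While b P) =
     least_fix (fun_le leM)
       (\<lambda>f \<rho>. if cond b \<rho> then kleisli eMM f (semT etaM eMM leM asgn cond P) \<rho> else etaM \<rho>)"

definition semC where
  "semC etaM eMM leM asgn cond etaO eMO alg P = sp etaO eMO alg (semT etaM eMM leM asgn cond P)"

definition grd :: "('b \<Rightarrow> 'm \<Rightarrow> bool) \<Rightarrow> 'b \<Rightarrow> bool \<Rightarrow> 'm \<Rightarrow> 'o::complete_lattice" where
  "grd cond b v = (\<lambda>\<rho>. if cond b \<rho> = v then top else bot)"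

definition lfp_mono :: "(('a::complete_lattice \<Rightarrow> 'a) \<Rightarrow> ('a \<Rightarrow> 'a)) \<Rightarrow> 'a \<Rightarrow> 'a" where
  "lfp_mono Th = Inf {f. mono f \<and> Th f \<le> f}"

primrec semA :: "('o::complete_lattice \<Rightarrow> 'to) \<Rightarrow> (('m \<Rightarrow> 'to) \<Rightarrow> 'tm \<Rightarrow> 'to) \<Rightarrow> ('to \<Rightarrow> 'o) \<Rightarrow>
    (('m \<Rightarrow> 'o) \<Rightarrow> 'a::complete_lattice) \<Rightarrow> ('a \<Rightarrow> 'm \<Rightarrow> 'o) \<Rightarrow>
    ('x \<Rightarrow> 'e \<Rightarrow> 'm \<Rightarrow> 'tm) \<Rightarrow> ('b \<Rightarrow> 'm \<Rightarrow> bool) \<Rightarrow> ('x, 'e, 'b) prog \<Rightarrow> 'a \<Rightarrow> 'a" where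
  "semA etaO eMO alg \<alpha> \<gamma> asgn cond Skip = id"
| "semA etaO eMO alg \<alpha> \<gamma> asgn cond (Seq P Q) =
     semA etaO eMO alg \<alpha> \<gamma> asgn cond Q \<circ> semA etaO eMO alg \<alpha> \<gamma> asgn cond P"
| "semA etaO eMO alg \<alpha> \<gamma> asgn cond (Assign x e) = \<alpha> \<circ> sp etaO eMO alg (asgn x e) \<circ> \<gamma>"
| "semA etaO eMO alg \<alpha> \<gamma> asgn cond (If b P Q) =
     (\<lambda>\<phi>. sup (semA etaO eMO alg \<alpha> \<gamma> asgn cond P (inf \<phi> (\<alpha> (grd cond b True))))
              (semA etaO eMO alg \<alpha> \<gamma> asgn cond Q (inf \<phi> (\<alpha> (grd cond b False)))))"
| "semA etaO eMO alg \<alpha> \<gamma> asgn cond (While b P) =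
     lfp_mono (\<lambda>f \<phi>. sup (f (semA etaO eMO alg \<alpha> \<gamma> asgn cond P (inf \<phi> (\<alpha> (grd cond b True)))))
                         (inf \<phi> (\<alpha> (grd cond b False))))"

end

theory Submission
  imports Defs
begin

text \<open>Since \<open>o\<close> turns Kleisli composition into composition of predicate transformers and is
  meet-preserving, \<open>wp\<^sup>o(f)\<close> preserves all meets and so has the left adjoint \<open>sp\<^sup>o(f)\<close>;
  by adjointness, soundness \<open>\<alpha> \<circ> sp\<^sup>o(\<lbrakk>P\<rbrakk>\<^sub>T) \<circ> \<gamma> \<le> \<lbrakk>P\<rbrakk>\<^sup>\<sharp>\<close> is equivalent to the Hoare-style
  statement \<open>\<gamma> a \<le> wp\<^sup>o(\<lbrakk>P\<rbrakk>\<^sub>T)(\<gamma>(\<lbrakk>P\<rbrakk>\<^sup>\<sharp> a))\<close>, proved by induction on \<open>P\<close>.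
  For a loop, \<open>\<lbrakk>while b {P}\<rbrakk>\<^sub>T\<close> is the supremum of its Kleene iterates, whose
  weakest preconditions form a descending chain, since \<open>o\<close> sends suprema of chains to infima
  and \<open>\<Uparrow>\<close> to \<open>\<top>\<close>; the induction hypothesis for the body together with the fact that
  \<open>\<lbrakk>while b {P}\<rbrakk>\<^sup>\<sharp>\<close> is a pre-fixpoint of \<open>\<Theta>\<close> shows the Hoare triple for every iterate.
  Functoriality is immediate, as sequencing is interpreted by composition.\<close>

lemma is_lub_unique:
  assumes "\<forall>x y. le x y \<longrightarrow> le y x \<longrightarrow> x = y" "is_lub le c s" "is_lub le c t"
  shows "s = t"
  using assms unfolding is_lub_def by blast

lemma is_lub_fun_iff: "is_lub (fun_le le) fs F \<longleftrightarrow> (\<forall>x. is_lub le (\<lambda>i. fs i x) (F x))"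
proof
  assume lub: "is_lub (fun_le le) fs F"
  show "\<forall>x. is_lub le (\<lambda>i. fs i x) (F x)"
    unfolding is_lub_def
  proof (intro allI conjI impI)
    fix x i show "le (fs i x) (F x)" using lub unfolding is_lub_def fun_le_def by blast
  next
    fix x u assume "\<forall>i. le (fs i x) u"
    hence "\<forall>i. fun_le le (fs i) (F(x := u))"
      using lub unfolding is_lub_def fun_le_def by auto
    hence "fun_le le F (F(x := u))" using lub unfolding is_lub_def by blast
    thus "le (F x) u" unfolding fun_le_def by (metis fun_upd_same)
  qed
qed (auto simp: is_lub_def fun_le_def)

lemma omega_chain_fun_iff: "omega_chain (fun_le le) fs \<longleftrightarrow> (\<forall>x. omega_chain le (\<lambda>i. fs i x))"
  unfolding omega_chain_def fun_le_def by blast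

lemma omega_cpo_fun:
  assumes "omega_cpo le bt"
  shows "omega_cpo (fun_le le) (\<lambda>_. bt)"
proof -
  have refl: "\<forall>x. le x x" and trans: "\<forall>x y z. le x y \<longrightarrow> le y z \<longrightarrow> le x z"
    and antisym: "\<forall>x y. le x y \<longrightarrow> le y x \<longrightarrow> x = y" and bt_least: "\<forall>x. le bt x"
    and lub: "\<forall>c. omega_chain le c \<longrightarrow> (\<exists>s. is_lub le c s)"
    using assms unfolding omega_cpo_def by blast+
  show ?thesis unfolding omega_cpo_def
  proof (intro conjI allI impI)
    fix f g assume "fun_le le f g" "fun_le le g f"
    thus "f = g" using antisym unfolding fun_le_def by (intro ext) blast
  next
    fix c assume "omega_chain (fun_le le) c"
    hence "\<forall>x. \<exists>s. is_lub le (\<lambda>i. c i x) s"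
      using lub unfolding omega_chain_fun_iff by blast
    thus "\<exists>F. is_lub (fun_le le) c F" unfolding is_lub_fun_iff by (rule choice)
  next
    fix f show "fun_le le f f" using refl unfolding fun_le_def by blast
  next
    fix f g h assume "fun_le le f g" "fun_le le g h"
    thus "fun_le le f h" using trans unfolding fun_le_def by blast
  next
    fix f show "fun_le le (\<lambda>_. bt) f" using bt_least unfolding fun_le_def by blast
  qed
qed

lemma kleene_chain:
  assumes "\<forall>x. le bt x" "\<forall>x y. le x y \<longrightarrow> le (F x) (F y)"
  shows "omega_chain le (\<lambda>i. (F ^^ i) bt)"
  unfolding omega_chain_def
proof
  fix i show "le ((F ^^ i) bt) ((F ^^ Suc i) bt)"
  proof (induction i)
    case 0 show ?case using assms(1) by simp
  next
    case (Suc i) thus ?case using assms(2) by simp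
  qed
qed

lemma least_fix_kleene:
  assumes cpo: "omega_cpo le bt"
    and mono: "\<forall>x y. le x y \<longrightarrow> le (F x) (F y)"
    and cont: "\<forall>c s. omega_chain le c \<longrightarrow> is_lub le c s \<longrightarrow> is_lub le (\<lambda>i. F (c i)) (F s)"
    and lub: "is_lub le (\<lambda>i. (F ^^ i) bt) s"
  shows "least_fix le F = s"
  unfolding least_fix_def
proof (rule the_equality)
  have bt_least: "\<forall>x. le bt x" and antisym: "\<forall>x y. le x y \<longrightarrow> le y x \<longrightarrow> x = y"
    using cpo unfolding omega_cpo_def by blast+
  have "is_lub le (\<lambda>i. (F ^^ Suc i) bt) (F s)"
    using cont kleene_chain[OF bt_least mono] lub by simp
  moreover have "is_lub le (\<lambda>i. (F ^^ Suc i) bt) s"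
    unfolding is_lub_def
  proof (intro conjI allI impI)
    fix i show "le ((F ^^ Suc i) bt) s" using lub unfolding is_lub_def by blast
  next
    fix u assume "\<forall>i. le ((F ^^ Suc i) bt) u"
    hence "le ((F ^^ i) bt) u" for i using bt_least by (cases i) auto
    thus "le s u" using lub unfolding is_lub_def by blast
  qed
  ultimately have fixpoint: "F s = s" using is_lub_unique[OF antisym] by blast
  have least: "le s g" if "F g = g" for g
  proof -
    have "le ((F ^^ i) bt) g" for i
    proof (induction i)
      case (Suc i)
      have "le (F ((F ^^ i) bt)) (F g)" using mono Suc.IH by blast
      thus ?case using that by simp
    qed (simp add: bt_least)
    thus ?thesis using lub unfolding is_lub_def by blast
  qed
  show "F s = s \<and> (\<forall>g. F g = g \<longrightarrow> le s g)" using fixpoint least by blast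
  show "f = s" if "F f = f \<and> (\<forall>g. F g = g \<longrightarrow> le f g)" for f
    using that fixpoint least antisym by blast
qed

lemma lfp_mono_prefixpoint:
  assumes "\<And>f g. f \<le> g \<Longrightarrow> Th f \<le> Th g"
  shows "Th (lfp_mono Th) \<le> lfp_mono Th"
  unfolding lfp_mono_def
proof (rule Inf_greatest)
  fix f assume "f \<in> {f. mono f \<and> Th f \<le> f}"
  hence "Inf {f. mono f \<and> Th f \<le> f} \<le> f" "Th f \<le> f" by (auto intro: Inf_lower)
  thus "Th (Inf {f. mono f \<and> Th f \<le> f}) \<le> f" using assms order_trans by blast
qed

lemma mono_lfp_mono: "mono (lfp_mono Th)"
  unfolding lfp_mono_def
  by (rule monoI) (auto simp: Inf_apply intro!: INF_mono dest: monoD)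

locale wp_semantics =
  fixes etaM :: "'m \<Rightarrow> 'tm" and etaO :: "'o::complete_lattice \<Rightarrow> 'to"
    and eMM :: "('m \<Rightarrow> 'tm) \<Rightarrow> 'tm \<Rightarrow> 'tm"
    and eMO :: "('m \<Rightarrow> 'to) \<Rightarrow> 'tm \<Rightarrow> 'to"
    and eOM :: "('o \<Rightarrow> 'tm) \<Rightarrow> 'to \<Rightarrow> 'tm"
    and eOO :: "('o \<Rightarrow> 'to) \<Rightarrow> 'to \<Rightarrow> 'to"
    and leM :: "'tm \<Rightarrow> 'tm \<Rightarrow> bool" and botM :: 'tm
    and leO :: "'to \<Rightarrow> 'to \<Rightarrow> bool" and botO :: 'to
    and alg :: "'to \<Rightarrow> 'o"
  assumes while_monad: "while_monad etaM etaO eMM eMO eOM eOO leM botM leO botO"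
    and em_algebra: "em_algebra etaO eMO eOO alg"
    and meet_preserving: "meet_preserving etaO eMO eOO alg"
    and alg_lub: "\<forall>c s. omega_chain leO c \<longrightarrow> is_lub leO c s \<longrightarrow> alg s = (INF i. alg (c i))"
    and alg_bot: "alg botO = top"
begin

abbreviation "WP \<equiv> wp etaO eMO alg"
abbreviation "SP \<equiv> sp etaO eMO alg"

lemma omega_cpo_M: "omega_cpo leM botM"
  and kleisli_conds_MM: "kleisli_conds TYPE('m) leM botM leM botM eMM"
  and kleisli_conds_MO: "kleisli_conds TYPE('m) leM botM leO botO eMO"
  using while_monad unfolding while_monad_def by blast+

lemma wp_Inf: "WP f (Inf X) \<rho> = (INF \<phi>\<in>X. WP f \<phi> \<rho>)"
proof -
  have "alg \<circ> Tmap eMO etaO (Inf X) = Inf ((\<lambda>\<phi>. alg \<circ> Tmap eMO etaO \<phi>) ` X)"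
    using meet_preserving unfolding meet_preserving_def by blast
  hence "alg (Tmap eMO etaO (Inf X) (f \<rho>)) = Inf ((\<lambda>\<phi>. alg \<circ> Tmap eMO etaO \<phi>) ` X) (f \<rho>)"
    by (metis comp_apply)
  thus ?thesis unfolding wp_def by (simp add: Inf_apply image_comp comp_def)
qed

lemma wp_mono: "\<phi> \<le> \<psi> \<Longrightarrow> WP f \<phi> \<le> WP f \<psi>"
proof (rule le_funI)
  fix \<rho> assume "\<phi> \<le> \<psi>"
  hence "WP f \<phi> \<rho> = WP f (Inf {\<phi>, \<psi>}) \<rho>" by (simp add: inf_absorb1)
  also have "\<dots> = inf (WP f \<phi> \<rho>) (WP f \<psi> \<rho>)" using wp_Inf[of f "{\<phi>, \<psi>}"] by simp
  finally show "WP f \<phi> \<rho> \<le> WP f \<psi> \<rho>" by (metis inf.cobounded2)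
qed

lemma sp_le_iff: "SP f \<psi> \<le> \<phi> \<longleftrightarrow> \<psi> \<le> WP f \<phi>"
proof -
  define g where "g \<psi> = Inf {\<phi>. \<psi> \<le> WP f \<phi>}" for \<psi>
  have g_adj: "\<forall>\<psi> \<phi>. g \<psi> \<le> \<phi> \<longleftrightarrow> \<psi> \<le> WP f \<phi>"
  proof (intro allI iffI)
    fix \<psi> \<phi> assume "g \<psi> \<le> \<phi>"
    moreover have "\<psi> \<le> WP f (g \<psi>)"
      unfolding g_def by (rule le_funI) (auto simp: wp_Inf le_INF_iff le_fun_def)
    ultimately show "\<psi> \<le> WP f \<phi>" using wp_mono order_trans by blast
  next
    fix \<psi> \<phi> assume "\<psi> \<le> WP f \<phi>" thus "g \<psi> \<le> \<phi>" unfolding g_def by (auto intro: Inf_lower)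
  qed
  have "SP f = g" unfolding sp_def
  proof (rule the_equality)
    fix h assume "\<forall>\<psi> \<phi>. h \<psi> \<le> \<phi> \<longleftrightarrow> \<psi> \<le> WP f \<phi>"
    with g_adj show "h = g" by (metis order_antisym order_refl ext)
  qed (rule g_adj)
  thus ?thesis using g_adj by simp
qed

lemma sp_mono: "mono (SP f)"
  by (rule monoI) (metis sp_le_iff order_refl order_trans)

lemma wp_kleisli: "WP (kleisli eMM g f) \<phi> = WP f (WP g \<phi>)"
proof
  fix \<rho>
  have "ext_assoc eMM eMO eMO" using while_monad unfolding while_monad_def by blast
  hence "eMO (etaO \<circ> \<phi>) (eMM g (f \<rho>)) = eMO (\<lambda>y. eMO (etaO \<circ> \<phi>) (g y)) (f \<rho>)"
    unfolding ext_assoc_def by blast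
  moreover have "alg (eMO (\<lambda>y. eMO (etaO \<circ> \<phi>) (g y)) (f \<rho>)) =
      alg (Tmap eMO etaO (alg \<circ> (\<lambda>y. eMO (etaO \<circ> \<phi>) (g y))) (f \<rho>))"
    using em_algebra unfolding em_algebra_def by blast
  ultimately show "WP (kleisli eMM g f) \<phi> \<rho> = WP f (WP g \<phi>) \<rho>"
    unfolding wp_def kleisli_def Tmap_def by (simp add: comp_def)
qed

lemma wp_eta: "WP etaM \<phi> = \<phi>"
proof
  fix \<rho>
  have "unit_left etaM eMO" using while_monad unfolding while_monad_def by blast
  hence "eMO (etaO \<circ> \<phi>) (etaM \<rho>) = etaO (\<phi> \<rho>)" unfolding unit_left_def by simp
  thus "WP etaM \<phi> \<rho> = \<phi> \<rho>" using em_algebra unfolding wp_def Tmap_def em_algebra_def by simp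
qed

lemma wp_bot: "WP (\<lambda>_. botM) \<phi> \<rho> = top"
proof -
  have "kleisli eMO g (\<lambda>_::'m. botM) = (\<lambda>_. botO)" for g
    using kleisli_conds_MO unfolding kleisli_conds_def by blast
  hence "eMO g botM = botO" for g unfolding kleisli_def by (metis comp_apply)
  thus ?thesis unfolding wp_def Tmap_def using alg_bot by simp
qed

lemma wp_lub:
  assumes "omega_chain (fun_le leM) fs" "is_lub (fun_le leM) fs F"
  shows "WP F \<phi> \<rho> = (INF i. WP (fs i) \<phi> \<rho>)"
proof -
  let ?k = "\<lambda>f. kleisli eMO (etaO \<circ> \<phi>) f"
  have "is_lub (fun_le leO) (\<lambda>i. ?k (fs i)) (?k F)"
    and "omega_chain (fun_le leO) (\<lambda>i. ?k (fs i))"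
    using kleisli_conds_MO assms unfolding kleisli_conds_def omega_chain_def by blast+
  hence "is_lub leO (\<lambda>i. ?k (fs i) \<rho>) (?k F \<rho>)" and "omega_chain leO (\<lambda>i. ?k (fs i) \<rho>)"
    unfolding is_lub_fun_iff omega_chain_fun_iff by blast+
  hence "alg (?k F \<rho>) = (INF i. alg (?k (fs i) \<rho>))" using alg_lub by blast
  thus ?thesis unfolding wp_def Tmap_def kleisli_def by simp
qed

definition loop_step :: "('m \<Rightarrow> bool) \<Rightarrow> ('m \<Rightarrow> 'tm) \<Rightarrow> ('m \<Rightarrow> 'tm) \<Rightarrow> 'm \<Rightarrow> 'tm" where
  "loop_step c T f \<rho> = (if c \<rho> then kleisli eMM f T \<rho> else etaM \<rho>)"

lemma semT_While:
  "semT etaM eMM leM asgn cond (While b P) =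
     least_fix (fun_le leM) (loop_step (cond b) (semT etaM eMM leM asgn cond P))"
  by (simp add: loop_step_def[abs_def])

lemma loop_step_mono: "fun_le leM f g \<Longrightarrow> fun_le leM (loop_step c T f) (loop_step c T g)"
  using kleisli_conds_MM omega_cpo_M
  unfolding kleisli_conds_def omega_cpo_def loop_step_def fun_le_def by auto

lemma loop_step_cont:
  assumes "omega_chain (fun_le leM) fs" "is_lub (fun_le leM) fs F"
  shows "is_lub (fun_le leM) (\<lambda>i. loop_step c T (fs i)) (loop_step c T F)"
proof -
  have "is_lub (fun_le leM) (\<lambda>i. kleisli eMM (fs i) T) (kleisli eMM F T)"
    using kleisli_conds_MM assms unfolding kleisli_conds_def by blast
  moreover have "leM (etaM \<rho>) (etaM \<rho>)" for \<rho>
    using omega_cpo_M unfolding omega_cpo_def by blast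
  ultimately show ?thesis
    unfolding is_lub_fun_iff loop_step_def by (auto simp: is_lub_def)
qed

lemma loop_iterates_chain: "omega_chain (fun_le leM) (\<lambda>i. (loop_step c T ^^ i) (\<lambda>_. botM))"
  using kleene_chain[of "fun_le leM"] loop_step_mono omega_cpo_fun[OF omega_cpo_M]
  unfolding omega_cpo_def by blast

lemma least_fix_loop_step:
  "is_lub (fun_le leM) (\<lambda>i. (loop_step c T ^^ i) (\<lambda>_. botM))
     (least_fix (fun_le leM) (loop_step c T))"
proof -
  obtain F where lub: "is_lub (fun_le leM) (\<lambda>i. (loop_step c T ^^ i) (\<lambda>_. botM)) F"
    using omega_cpo_fun[OF omega_cpo_M] loop_iterates_chain unfolding omega_cpo_def by blast
  have "least_fix (fun_le leM) (loop_step c T) = F"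
    using least_fix_kleene[OF omega_cpo_fun[OF omega_cpo_M] _ _ lub] loop_step_mono loop_step_cont
    by blast
  thus ?thesis using lub by simp
qed

lemma wp_loop_step: "WP (loop_step c T f) \<phi> \<rho> = (if c \<rho> then WP T (WP f \<phi>) \<rho> else \<phi> \<rho>)"
proof -
  have "WP (loop_step c T f) \<phi> \<rho> = (if c \<rho> then WP (kleisli eMM f T) \<phi> \<rho> else WP etaM \<phi> \<rho>)"
    by (simp add: loop_step_def wp_def)
  thus ?thesis by (simp add: wp_kleisli wp_eta)
qed

end

locale abstract_semantics =
  wp_semantics etaM etaO eMM eMO eOM eOO leM botM leO botO alg
  for etaM :: "'m \<Rightarrow> 'tm" and etaO :: "'o::complete_lattice \<Rightarrow> 'to"
    and eMM eMO eOM eOO leM botM leO botO alg +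
  fixes \<alpha> :: "('m \<Rightarrow> 'o) \<Rightarrow> 'abs::complete_lattice" and \<gamma> :: "'abs \<Rightarrow> 'm \<Rightarrow> 'o"
  assumes galois: "\<forall>\<phi> a. \<alpha> \<phi> \<le> a \<longleftrightarrow> \<phi> \<le> \<gamma> a"
begin

abbreviation "semA' \<equiv> semA etaO eMO alg \<alpha> \<gamma>"
abbreviation "semT' \<equiv> semT etaM eMM leM"

lemma alpha_mono: "\<phi> \<le> \<psi> \<Longrightarrow> \<alpha> \<phi> \<le> \<alpha> \<psi>"
  using galois order_trans order_refl by metis

lemma gamma_mono: "a \<le> b \<Longrightarrow> \<gamma> a \<le> \<gamma> b"
  using galois order_trans order_refl by metis

lemma le_gamma_alpha: "\<phi> \<le> \<gamma> (\<alpha> \<phi>)"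
  using galois by blast

lemma gamma_le_gamma_guard: "cond b \<rho> = v \<Longrightarrow> \<gamma> a \<rho> \<le> \<gamma> (inf a (\<alpha> (grd cond b v))) \<rho>"
proof -
  assume "cond b \<rho> = v"
  hence grd_top: "grd cond b v \<rho> = top" by (simp add: grd_def)
  have "\<alpha> (inf (\<gamma> a) (grd cond b v)) \<le> a" using galois by (meson inf.cobounded1)
  moreover have "\<alpha> (inf (\<gamma> a) (grd cond b v)) \<le> \<alpha> (grd cond b v)" by (rule alpha_mono) simp
  ultimately have "\<alpha> (inf (\<gamma> a) (grd cond b v)) \<le> inf a (\<alpha> (grd cond b v))"
    by (rule le_infI)
  hence "inf (\<gamma> a) (grd cond b v) \<le> \<gamma> (inf a (\<alpha> (grd cond b v)))"
    using galois by blast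
  hence "inf (\<gamma> a \<rho>) (grd cond b v \<rho>) \<le> \<gamma> (inf a (\<alpha> (grd cond b v))) \<rho>"
    by (simp add: le_fun_def)
  thus ?thesis using grd_top by (metis inf_top_right)
qed

lemma semA_mono: "mono (semA' asgn cond P)"
proof (induction P)
  case (If b P Q)
  show ?case
  proof (rule monoI)
    fix a a' :: 'abs assume "a \<le> a'"
    hence guarded: "inf a (\<alpha> (grd cond b v)) \<le> inf a' (\<alpha> (grd cond b v))" for v
      by (rule inf_mono) simp
    show "semA' asgn cond (If b P Q) a \<le> semA' asgn cond (If b P Q) a'"
      unfolding semA.simps
      by (rule sup_mono) (rule monoD[OF If.IH(1) guarded], rule monoD[OF If.IH(2) guarded])
  qed
next
  case (Assign x e)
  show ?case by (rule monoI) (simp add: alpha_mono monoD[OF sp_mono] gamma_mono)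
next
  case (While b P)
  show ?case by (simp only: semA.simps mono_lfp_mono)
qed (simp_all add: mono_def)

lemma gamma_le_wp_while:
  assumes body: "\<And>a. \<gamma> a \<le> WP T (\<gamma> (A a))"
    and unfold: "\<And>a. W (A (inf a (\<alpha> (grd cond b True)))) \<le> W a"
    and exit: "\<And>a. inf a (\<alpha> (grd cond b False)) \<le> W a"
  shows "\<gamma> a \<le> WP (least_fix (fun_le leM) (loop_step (cond b) T)) (\<gamma> (W a))"
proof -
  let ?it = "\<lambda>i. (loop_step (cond b) T ^^ i) (\<lambda>_. botM)"
  have iterate: "\<gamma> a \<le> WP (?it i) (\<gamma> (W a))" for i a
  proof (induction i arbitrary: a)
    case 0 show ?case by (simp add: le_fun_def wp_bot)
  next
    case (Suc i)
    show ?case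
    proof (rule le_funI)
      fix \<rho> show "\<gamma> a \<rho> \<le> WP (?it (Suc i)) (\<gamma> (W a)) \<rho>"
      proof (cases "cond b \<rho>")
        case True
        let ?a = "A (inf a (\<alpha> (grd cond b True)))"
        have "\<gamma> a \<rho> \<le> \<gamma> (inf a (\<alpha> (grd cond b True))) \<rho>"
          using True by (intro gamma_le_gamma_guard) simp
        also have "\<dots> \<le> WP T (\<gamma> ?a) \<rho>" using body by (simp add: le_fun_def)
        also have "\<dots> \<le> WP T (WP (?it i) (\<gamma> (W ?a))) \<rho>"
          using wp_mono[OF Suc.IH] by (simp add: le_fun_def)
        also have "\<dots> \<le> WP T (WP (?it i) (\<gamma> (W a))) \<rho>"
          using wp_mono[OF wp_mono[OF gamma_mono[OF unfold]]] by (simp add: le_fun_def)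
        finally show ?thesis using True by (simp add: wp_loop_step)
      next
        case False
        have "\<gamma> a \<rho> \<le> \<gamma> (inf a (\<alpha> (grd cond b False))) \<rho>"
          using False by (intro gamma_le_gamma_guard) simp
        also have "\<dots> \<le> \<gamma> (W a) \<rho>" using gamma_mono[OF exit] by (simp add: le_fun_def)
        finally show ?thesis using False by (simp add: wp_loop_step)
      qed
    qed
  qed
  have "\<gamma> a \<le> (\<lambda>\<rho>. INF i. WP (?it i) (\<gamma> (W a)) \<rho>)"
    using iterate by (auto simp: le_fun_def intro: INF_greatest)
  also have "\<dots> = WP (least_fix (fun_le leM) (loop_step (cond b) T)) (\<gamma> (W a))"
    by (rule ext) (rule wp_lub[OF loop_iterates_chain least_fix_loop_step, symmetric])
  finally show ?thesis .
qed

lemma gamma_le_wp_semA: "\<gamma> a \<le> WP (semT' asgn cond P) (\<gamma> (semA' asgn cond P a))"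
proof (induction P arbitrary: a)
  case Skip show ?case by (simp add: wp_eta)
next
  case (Seq P Q)
  have "\<gamma> a \<le> WP (semT' asgn cond P) (\<gamma> (semA' asgn cond P a))" by (rule Seq.IH(1))
  also have "\<dots> \<le> WP (semT' asgn cond P) (WP (semT' asgn cond Q)
                    (\<gamma> (semA' asgn cond Q (semA' asgn cond P a))))"
    by (rule wp_mono) (rule Seq.IH(2))
  finally show ?case by (simp add: wp_kleisli)
next
  case (Assign x e)
  show ?case using sp_le_iff[THEN iffD1, OF le_gamma_alpha] by simp
next
  case (If b P Q)
  let ?r = "semA' asgn cond (If b P Q) a"
  show ?case
  proof (rule le_funI)
    fix \<rho>
    have "\<gamma> a \<rho> \<le> WP (semT' asgn cond R) (\<gamma> ?r) \<rho>"
      if IH: "\<And>a. \<gamma> a \<le> WP (semT' asgn cond R) (\<gamma> (semA' asgn cond R a))"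
        and "cond b \<rho> = v" and "semA' asgn cond R (inf a (\<alpha> (grd cond b v))) \<le> ?r" for R v
    proof -
      have "\<gamma> a \<rho> \<le> \<gamma> (inf a (\<alpha> (grd cond b v))) \<rho>" using that(2) by (rule gamma_le_gamma_guard)
      also have "\<dots> \<le> WP (semT' asgn cond R) (\<gamma> (semA' asgn cond R (inf a (\<alpha> (grd cond b v))))) \<rho>"
        using IH by (simp add: le_fun_def)
      also have "\<dots> \<le> WP (semT' asgn cond R) (\<gamma> ?r) \<rho>"
        using wp_mono[OF gamma_mono[OF that(3)]] by (simp add: le_fun_def)
      finally show ?thesis .
    qed
    from this[OF If.IH(1)] this[OF If.IH(2)]
    show "\<gamma> a \<rho> \<le> WP (semT' asgn cond (If b P Q)) (\<gamma> ?r) \<rho>"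
      by (cases "cond b \<rho>") (simp_all add: wp_def)
  qed
next
  case (While b P)
  let ?\<Theta> = "\<lambda>f \<phi>. sup (f (semA' asgn cond P (inf \<phi> (\<alpha> (grd cond b True)))))
                        (inf \<phi> (\<alpha> (grd cond b False)))"
  have "?\<Theta> (lfp_mono ?\<Theta>) \<le> lfp_mono ?\<Theta>"
    by (rule lfp_mono_prefixpoint) (auto simp: le_fun_def intro: sup_mono le_supI1)
  hence "semA' asgn cond (While b P) (semA' asgn cond P (inf a (\<alpha> (grd cond b True))))
           \<le> semA' asgn cond (While b P) a"
    and "inf a (\<alpha> (grd cond b False)) \<le> semA' asgn cond (While b P) a" for a
    by (auto simp: le_fun_def)
  thus ?case unfolding semT_While using While.IH by (intro gamma_le_wp_while)
qed

theorem semA_sound: "\<alpha> \<circ> semC etaM eMM leM asgn cond etaO eMO alg P \<circ> \<gamma> \<le> semA' asgn cond P"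
proof (rule le_funI)
  fix a
  have "SP (semT' asgn cond P) (\<gamma> a) \<le> \<gamma> (semA' asgn cond P a)"
    using sp_le_iff gamma_le_wp_semA by blast
  thus "(\<alpha> \<circ> semC etaM eMM leM asgn cond etaO eMO alg P \<circ> \<gamma>) a \<le> semA' asgn cond P a"
    using galois by (simp add: semC_def)
qed

end

lemma semA_prog_eq:
  "prog_eq P Q \<Longrightarrow> semA etaO eMO alg \<alpha> \<gamma> asgn cond P = semA etaO eMO alg \<alpha> \<gamma> asgn cond Q"
  by (induction rule: prog_eq.induct) (auto simp: comp_assoc)

theorem mainTheorem6:
  fixes etaM :: "('x \<Rightarrow> 'v) \<Rightarrow> 'tm" and etaO :: "'o::complete_lattice \<Rightarrow> 'to"
    and eMM :: "(('x \<Rightarrow> 'v) \<Rightarrow> 'tm) \<Rightarrow> 'tm \<Rightarrow> 'tm"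
    and eMO :: "(('x \<Rightarrow> 'v) \<Rightarrow> 'to) \<Rightarrow> 'tm \<Rightarrow> 'to"
    and eOM :: "('o \<Rightarrow> 'tm) \<Rightarrow> 'to \<Rightarrow> 'tm"
    and eOO :: "('o \<Rightarrow> 'to) \<Rightarrow> 'to \<Rightarrow> 'to"
    and leM :: "'tm \<Rightarrow> 'tm \<Rightarrow> bool" and botM :: 'tm
    and leO :: "'to \<Rightarrow> 'to \<Rightarrow> bool" and botO :: 'to
    and alg :: "'to \<Rightarrow> 'o"
    and \<alpha> :: "(('x \<Rightarrow> 'v) \<Rightarrow> 'o) \<Rightarrow> 'a::complete_lattice"
    and \<gamma> :: "'a \<Rightarrow> ('x \<Rightarrow> 'v) \<Rightarrow> 'o"
    and asgn :: "'x \<Rightarrow> 'e \<Rightarrow> ('x \<Rightarrow> 'v) \<Rightarrow> 'tm"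
    and cond :: "'b \<Rightarrow> ('x \<Rightarrow> 'v) \<Rightarrow> bool"
  assumes "finite (UNIV :: 'x set)"
    and "while_monad etaM etaO eMM eMO eOM eOO leM botM leO botO"
    and "em_algebra etaO eMO eOO alg"
    and "meet_preserving etaO eMO eOO alg"
    and "\<forall>c s. omega_chain leO c \<longrightarrow> is_lub leO c s \<longrightarrow> alg s = (INF i. alg (c i))"
    and "alg botO = top"
    and "\<forall>\<phi> a. \<alpha> \<phi> \<le> a \<longleftrightarrow> \<phi> \<le> \<gamma> a"
  shows "(\<forall>P :: ('x, 'e, 'b) prog. mono (semA etaO eMO alg \<alpha> \<gamma> asgn cond P)) \<and>
         semA etaO eMO alg \<alpha> \<gamma> asgn cond Skip = id \<and>
         (\<forall>P Q :: ('x, 'e, 'b) prog. semA etaO eMO alg \<alpha> \<gamma> asgn cond (Seq P Q) =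
             semA etaO eMO alg \<alpha> \<gamma> asgn cond Q \<circ> semA etaO eMO alg \<alpha> \<gamma> asgn cond P) \<and>
         (\<forall>P Q :: ('x, 'e, 'b) prog. prog_eq P Q \<longrightarrow>
             semA etaO eMO alg \<alpha> \<gamma> asgn cond P = semA etaO eMO alg \<alpha> \<gamma> asgn cond Q) \<and>
         (\<forall>P :: ('x, 'e, 'b) prog.
             \<alpha> \<circ> semC etaM eMM leM asgn cond etaO eMO alg P \<circ> \<gamma> \<le> semA etaO eMO alg \<alpha> \<gamma> asgn cond P)"
proof -
  interpret abstract_semantics etaM etaO eMM eMO eOM eOO leM botM leO botO alg \<alpha> \<gamma>
    using assms(2-7) by unfold_locales
  show ?thesis by (intro conjI allI impI) (simp_all add: semA_mono semA_prog_eq semA_sound)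
qed

end
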